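(* Let $k\ge 3$ and $n_1,\dots,n_k\ge 2$, and let $r\in[k]$. If $k$ is even, then $MR_{n_1,\dots,n_k}\in\mathcal{O}(K_{n_1,\dots,n_k})$. If $k$ is odd, then $MR_{n_1,\dots,n_k}\in\mathcal{O}(CS^r_{n_1,\dots,n_k})$.
   Context: All three graphs are on the same vertex set $U_1\sqcup\cdots\sqcup U_k$ with $|U_i|=n_i$. $K_{n_1,\dots,n_k}$: edges exactly between different parts. Clique-star $CS^r_{n_1,\dots,n_k}$: each $U_i$ is a clique, all vertices of $U_r$ are adjacent to all vertices of every $U_i$, $i\ne r$, and no edges between $U_i,U_l$ for distinct $i,l\ne r$. Multi-leaf repeater $MR_{n_1,\dots,n_k}$: for each $i$ a vertex $w_i\in U_i$ is adjacent to the other $n_i-1$ vertices of $U_i$ (which are leaves), and $w_1,\dots,w_k$ form a clique; no other edges. The local complement $c_v(G)$ complements the edges among the neighbours of $v$; $\mathcal{O}(G)$ is the set of graphs on $V(G)$ obtainable from $G$ by finite sequences of local complements. *)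

theory Defs
  imports Main
begin

type_synonym 'v graph = "'v \<Rightarrow> 'v \<Rightarrow> bool"

text \<open>Vertex set U_0 \<union> ... \<union> U_(k-1), with U_i = {(i,j). j < n i}; parts indexed 0..k-1.\<close>
definition parts :: "nat \<Rightarrow> (nat \<Rightarrow> nat) \<Rightarrow> (nat \<times> nat) set" where
  "parts k n = {(i, j). i < k \<and> j < n i}"

definition local_complement :: "'v \<Rightarrow> 'v graph \<Rightarrow> 'v graph" where
  "local_complement v G = (\<lambda>x y. if x \<noteq> y \<and> G v x \<and> G v y then \<not> G x y else G x y)"

inductive_set lc_orbit :: "'v set \<Rightarrow> 'v graph \<Rightarrow> 'v graph set" for V G where
  refl: "G \<in> lc_orbit V G"
| step: "H \<in> lc_orbit V G \<Longrightarrow> v \<in> V \<Longrightarrow> local_complement v H \<in> lc_orbit V G"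

definition complete_multipartite :: "nat \<Rightarrow> (nat \<Rightarrow> nat) \<Rightarrow> (nat \<times> nat) graph" where
  "complete_multipartite k n = (\<lambda>x y. x \<in> parts k n \<and> y \<in> parts k n \<and> fst x \<noteq> fst y)"

definition clique_star :: "nat \<Rightarrow> nat \<Rightarrow> (nat \<Rightarrow> nat) \<Rightarrow> (nat \<times> nat) graph" where
  "clique_star r k n = (\<lambda>x y. x \<in> parts k n \<and> y \<in> parts k n \<and> x \<noteq> y \<and>
     (fst x = fst y \<or> fst x = r \<or> fst y = r))"

text \<open>Multi-leaf repeater with chosen centres w i \<in> U_i.\<close>
definition multi_leaf_repeater :: "nat \<Rightarrow> (nat \<Rightarrow> nat) \<Rightarrow> (nat \<Rightarrow> nat \<times> nat) \<Rightarrow> (nat \<times> nat) graph" where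
  "multi_leaf_repeater k n w = (\<lambda>x y. x \<in> parts k n \<and> y \<in> parts k n \<and> x \<noteq> y \<and>
     ((fst x = fst y \<and> (x = w (fst x) \<or> y = w (fst y))) \<or>
      (x = w (fst x) \<and> y = w (fst y))))"

end

theory Submission
  imports Defs
begin

(* Fix the part U_r and write w_i for the centre of U_i. Both starting graphs are, up to at most
   one local complement, the clique-star around U_r in which U_r itself is a clique or an
   independent set: complementing K_{n_1,...,n_k} at w_r turns every other part into a
   clique and deletes all edges between different parts other than U_r. Complementing next
   at w_i for each i different from r turns the clique U_i into a star centred at w_i, cuts
   U_i minus w_i off from U_r, and toggles the edges inside U_r. After these k - 1 steps U_r
   is a clique exactly when it started as one and k is odd, or started independent and k
   is even; in that situation a final local complement at w_r produces the multi-leaf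
   repeater. *)

text \<open>The graph after the parts in \<open>P\<close> have been processed: \<open>U_r\<close> is a clique iff \<open>c\<close>, a
  processed part is a star centred at its \<open>w\<close> and meets \<open>U_r\<close> only there, an unprocessed
  part is a clique completely joined to \<open>U_r\<close>.\<close>
definition repeater_stage ::
    "nat \<Rightarrow> nat \<Rightarrow> (nat \<Rightarrow> nat) \<Rightarrow> (nat \<Rightarrow> nat \<times> nat) \<Rightarrow> nat set \<Rightarrow> bool \<Rightarrow> (nat \<times> nat) graph" where
  "repeater_stage r k n w P c = (\<lambda>x y. x \<in> parts k n \<and> y \<in> parts k n \<and> x \<noteq> y \<and>
     (if fst x = r \<and> fst y = r then c
      else if fst x = r then (fst y \<in> P \<longrightarrow> y = w (fst y))
      else if fst y = r then (fst x \<in> P \<longrightarrow> x = w (fst x))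
      else fst x = fst y \<and> (fst x \<in> P \<longrightarrow> x = w (fst x) \<or> y = w (fst y))))"

lemma clique_star_eq_repeater_stage: "clique_star r k n = repeater_stage r k n w {} True"
  unfolding clique_star_def repeater_stage_def by (intro ext) auto

lemma local_complement_complete_multipartite:
  assumes "fst (w r) = r" "w r \<in> parts k n"
  shows "local_complement (w r) (complete_multipartite k n) = repeater_stage r k n w {} False"
  using assms
  unfolding local_complement_def complete_multipartite_def repeater_stage_def
  by (intro ext) auto

lemma repeater_stage_neighbours:
  assumes "fst (w i) = i" "w i \<in> parts k n" "i \<noteq> r" "i \<notin> P"
  shows "repeater_stage r k n w P c (w i) z \<longleftrightarrow> z \<in> parts k n \<and> z \<noteq> w i \<and> (fst z = r \<or> fst z = i)"
  using assms unfolding repeater_stage_def by auto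

lemma local_complement_repeater_stage:
  assumes "fst (w i) = i" "w i \<in> parts k n" "i \<noteq> r" "i \<notin> P"
  shows "local_complement (w i) (repeater_stage r k n w P c) = repeater_stage r k n w (insert i P) (\<not> c)"
proof (intro ext)
  fix x y
  show "local_complement (w i) (repeater_stage r k n w P c) x y = repeater_stage r k n w (insert i P) (\<not> c) x y"
    unfolding local_complement_def repeater_stage_neighbours[where w=w and i=i, OF assms]
    using assms unfolding repeater_stage_def by auto
qed

lemma local_complement_final_stage:
  assumes "\<forall>i<k. fst (w i) = i \<and> snd (w i) < n i" "r < k"
  shows "local_complement (w r) (repeater_stage r k n w ({..<k} - {r}) True) = multi_leaf_repeater k n w"
proof (intro ext)
  fix x y :: "nat \<times> nat"
  obtain a b c d where xy: "x = (a, b)" "y = (c, d)" by fastforce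
  define s where "s i = snd (w i)" for i
  have centres: "\<forall>i<k. w i = (i, s i) \<and> s i < n i"
    using assms(1) unfolding s_def by (metis prod.collapse)
  show "local_complement (w r) (repeater_stage r k n w ({..<k} - {r}) True) x y = multi_leaf_repeater k n w x y"
    using centres assms(2)
    unfolding xy local_complement_def repeater_stage_def multi_leaf_repeater_def parts_def
    by auto
qed

lemma repeater_stage_in_lc_orbit:
  assumes "\<forall>i<k. fst (w i) = i \<and> snd (w i) < n i"
    and "repeater_stage r k n w {} c \<in> lc_orbit (parts k n) G"
    and "P \<subseteq> {..<k} - {r}"
  shows "repeater_stage r k n w P (c \<noteq> odd (card P)) \<in> lc_orbit (parts k n) G"
proof -
  have "finite P"
    using assms(3) finite_subset by blast
  then show ?thesis
    using assms(3)
  proof (induction P rule: finite_subset_induct)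
    case empty
    then show ?case using assms(2) by simp
  next
    case (insert i P)
    have centre: "fst (w i) = i" "w i \<in> parts k n" "i \<noteq> r"
      using assms(1) insert.hyps(2) by (auto simp: parts_def)
    have "local_complement (w i) (repeater_stage r k n w P (c \<noteq> odd (card P)))
        \<in> lc_orbit (parts k n) G"
      using insert.IH centre(2) by (rule lc_orbit.step)
    then show ?case
      using insert.hyps(1,3)
      by (simp add: local_complement_repeater_stage[where w = w and i = i, OF centre insert.hyps(3)])
  qed
qed

lemma multi_leaf_repeater_in_lc_orbit:
  assumes "\<forall>i<k. fst (w i) = i \<and> snd (w i) < n i" "r < k"
    and "repeater_stage r k n w {} (odd k) \<in> lc_orbit (parts k n) G"
  shows "multi_leaf_repeater k n w \<in> lc_orbit (parts k n) G"
proof -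
  have "card ({..<k} - {r}) = k - 1"
    using assms(2) by simp
  moreover have "odd k \<noteq> odd (k - 1)"
    using assms(2) by simp
  ultimately have "repeater_stage r k n w ({..<k} - {r}) True \<in> lc_orbit (parts k n) G"
    using repeater_stage_in_lc_orbit[OF assms(1,3), of "{..<k} - {r}"] by simp
  moreover have "w r \<in> parts k n"
    using assms(1,2) by (auto simp: parts_def)
  ultimately have "local_complement (w r) (repeater_stage r k n w ({..<k} - {r}) True)
      \<in> lc_orbit (parts k n) G"
    by (rule lc_orbit.step)
  then show ?thesis
    unfolding local_complement_final_stage[OF assms(1,2)] .
qed

theorem theorem9:
  fixes k r :: nat and n :: "nat \<Rightarrow> nat" and w :: "nat \<Rightarrow> nat \<times> nat"
  assumes "k \<ge> 3"
    and "\<forall>i<k. n i \<ge> 2"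
    and "r < k"
    and "\<forall>i<k. fst (w i) = i \<and> snd (w i) < n i"
  shows "(even k \<longrightarrow> multi_leaf_repeater k n w \<in> lc_orbit (parts k n) (complete_multipartite k n))
       \<and> (odd k \<longrightarrow> multi_leaf_repeater k n w \<in> lc_orbit (parts k n) (clique_star r k n))"
proof (intro conjI impI)
  have centre_r: "fst (w r) = r" "w r \<in> parts k n"
    using assms(3,4) by (auto simp: parts_def)
  assume "even k"
  have "local_complement (w r) (complete_multipartite k n)
      \<in> lc_orbit (parts k n) (complete_multipartite k n)"
    using lc_orbit.refl centre_r(2) by (rule lc_orbit.step)
  then show "multi_leaf_repeater k n w \<in> lc_orbit (parts k n) (complete_multipartite k n)"
    using \<open>even k\<close> assms(3,4)
    by (intro multi_leaf_repeater_in_lc_orbit)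
      (simp_all add: local_complement_complete_multipartite[where w = w, OF centre_r])
next
  assume "odd k"
  then show "multi_leaf_repeater k n w \<in> lc_orbit (parts k n) (clique_star r k n)"
    using assms(3,4) lc_orbit.refl
    by (intro multi_leaf_repeater_in_lc_orbit) (simp_all add: clique_star_eq_repeater_stage[where w = w])
qed

end
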